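(* Let $\mathcal{D}$ be a distribution on $[n]$, $\varepsilon>0$, and $T$ any binary search tree on $[n]$. There is a monotonicity tester for functions $f:[n]\to\mathbb{R}$ with respect to $\mathcal{D}$ with proximity parameter $\varepsilon$ that makes at most $24\,\varepsilon^{-1}\Delta(T;\mathcal{D})$ queries.
   Context: A binary search tree (BST) on $[n]$ has nodes labeled bijectively by $[n]$ with left descendants smaller and right descendants larger; $\mathrm{depth}_T(v)$ is the number of edges from $v$ to the root, and $\Delta(T;\mathcal{D})=\mathbb{E}_{v\sim\mathcal{D}}[\mathrm{depth}_T(v)]$. $f$ is monotone if $f(x)\le f(y)$ for $x\le y$. A monotonicity tester w.r.t. $\mathcal{D}$ with proximity parameter $\varepsilon$ accepts monotone $f$ with probability $>2/3$ and rejects with probability $>2/3$ any $f$ with $\min_{g\text{ monotone}}\Pr_{x\sim\mathcal{D}}[f(x)\ne g(x)]>\varepsilon$. *)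

theory Defs
  imports "HOL-Library.Tree" "HOL-Probability.Probability"
begin

definition is_bst_on :: "nat \<Rightarrow> nat tree \<Rightarrow> bool" where
  "is_bst_on n T \<longleftrightarrow> bst T \<and> set_tree T = {1..n}"

fun node_depth :: "nat tree \<Rightarrow> nat \<Rightarrow> nat" where
  "node_depth Leaf v = 0"
| "node_depth (Node l a r) v =
     (if v = a then 0 else if v < a then Suc (node_depth l v) else Suc (node_depth r v))"

definition exp_depth :: "nat tree \<Rightarrow> nat pmf \<Rightarrow> real" where
  "exp_depth T D = measure_pmf.expectation D (\<lambda>v. real (node_depth T v))"

definition dist_mono :: "nat \<Rightarrow> nat pmf \<Rightarrow> (nat \<Rightarrow> real) \<Rightarrow> real" where
  "dist_mono n D f = Inf {measure_pmf.prob D {x. f x \<noteq> g x} | g. mono_on {1..n} g}"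

text \<open>Deterministic adaptive query algorithms: decision trees that query f at a point
  and branch on the real answer, finally outputting accept (True) or reject (False).\<close>
datatype qtree = Output bool | Ask nat "real \<Rightarrow> qtree"

primrec run_qt :: "qtree \<Rightarrow> (nat \<Rightarrow> real) \<Rightarrow> bool" where
  "run_qt (Output b) f = b"
| "run_qt (Ask i k) f = run_qt (k (f i)) f"

primrec nqueries :: "qtree \<Rightarrow> (nat \<Rightarrow> real) \<Rightarrow> nat" where
  "nqueries (Output b) f = 0"
| "nqueries (Ask i k) f = Suc (nqueries (k (f i)) f)"

primrec queries_in :: "nat set \<Rightarrow> qtree \<Rightarrow> (nat \<Rightarrow> real) \<Rightarrow> bool" where
  "queries_in S (Output b) f = True"
| "queries_in S (Ask i k) f = (i \<in> S \<and> queries_in S (k (f i)) f)"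

definition mono_tester :: "nat \<Rightarrow> nat pmf \<Rightarrow> real \<Rightarrow> qtree pmf \<Rightarrow> bool" where
  "mono_tester n D \<epsilon> A \<longleftrightarrow>
     (\<forall>t\<in>set_pmf A. \<forall>f. queries_in {1..n} t f) \<and>
     (\<forall>f. mono_on {1..n} f \<longrightarrow> measure_pmf.prob A {t. run_qt t f} > 2/3) \<and>
     (\<forall>f. dist_mono n D f > \<epsilon> \<longrightarrow> measure_pmf.prob A {t. \<not> run_qt t f} > 2/3)"

definition max_queries_le :: "qtree pmf \<Rightarrow> real \<Rightarrow> bool" where
  "max_queries_le A q \<longleftrightarrow> (\<forall>t\<in>set_pmf A. \<forall>f. real (nqueries t f) \<le> q)"

end

theory Submission
  imports Defs
begin

text \<open>
  The tester draws \<open>k = \<lceil>2/\<epsilon>\<rceil>\<close> samples from \<open>D\<close>, queries the search path of each sample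
  in \<open>T\<close> and rejects if \<open>f\<close> is not monotone along it, giving up once \<open>24 \<Delta>/\<epsilon>\<close> queries
  would be exceeded. Nodes that are consistent with their search paths are pairwise consistent,
  so \<open>f\<close> agrees with a monotone function on them; hence if \<open>f\<close> is \<open>\<epsilon>\<close>-far, the inconsistent
  nodes have mass more than \<open>\<epsilon>\<close>, and all samples avoid them with probability at most
  \<open>exp (-k\<epsilon>)\<close>. Checking a node costs at most twice its depth, so by Markov's inequality the
  budget is exhausted with probability at most \<open>k\<epsilon>/12\<close>, and
  \<open>exp (-x) + x/12 < 1/3\<close> for \<open>2 \<le> x \<le> 3\<close>.
\<close>

fun search_path :: "nat tree \<Rightarrow> nat \<Rightarrow> nat list" where
  "search_path Leaf v = []"
| "search_path (Node l a r) v =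
     a # (if v = a then [] else if v < a then search_path l v else search_path r v)"

lemma set_search_path_subset: "set (search_path T v) \<subseteq> set_tree T"
  by (induction T) auto

lemma mem_search_path: "bst T \<Longrightarrow> v \<in> set_tree T \<Longrightarrow> v \<in> set (search_path T v)"
  by (induction T) auto

lemma length_search_path:
  "bst T \<Longrightarrow> v \<in> set_tree T \<Longrightarrow> length (search_path T v) = Suc (node_depth T v)"
  by (induction T) auto

definition path_consistent :: "nat tree \<Rightarrow> (nat \<Rightarrow> real) \<Rightarrow> nat \<Rightarrow> bool" where
  "path_consistent T f v \<longleftrightarrow>
     (\<forall>u\<in>set (search_path T v). (u \<le> v \<longrightarrow> f u \<le> f v) \<and> (v \<le> u \<longrightarrow> f v \<le> f u))"

lemma path_consistent_cong:
  assumes "bst T" "v \<in> set_tree T" "\<forall>u\<in>set (search_path T v). g u = f u"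
  shows "path_consistent T g v = path_consistent T f v"
  using assms mem_search_path[of T v] unfolding path_consistent_def by auto

lemma path_consistent_root:
  "node_depth T v = 0 \<Longrightarrow> v \<in> set_tree T \<Longrightarrow> path_consistent T f v"
  by (cases T) (auto simp: path_consistent_def split: if_splits)

lemma path_consistent_if_mono_on:
  "mono_on (set_tree T) f \<Longrightarrow> v \<in> set_tree T \<Longrightarrow> path_consistent T f v"
  using set_search_path_subset[of T v] unfolding path_consistent_def by (auto intro: mono_onD)

text \<open>Two consistent nodes are both consistent with their lowest common ancestor, which lies
  between them.\<close>
lemma path_consistent_mono_on:
  "bst T \<Longrightarrow> mono_on (set_tree T \<inter> {v. path_consistent T f v}) f"
proof (induction T)
  case (Node l a r)
  show ?case
  proof (rule mono_onI)
    fix x y assume x: "x \<in> set_tree \<langle>l, a, r\<rangle> \<inter> {v. path_consistent \<langle>l, a, r\<rangle> f v}"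
      and y: "y \<in> set_tree \<langle>l, a, r\<rangle> \<inter> {v. path_consistent \<langle>l, a, r\<rangle> f v}" and "x \<le> y"
    consider "y < a" | "a < x" | "x \<le> a" "a \<le> y" using \<open>x \<le> y\<close> by linarith
    then show "f x \<le> f y"
    proof cases
      case 1
      with \<open>x \<le> y\<close> have "x < a" by simp
      with 1 have "x \<in> set_tree l \<inter> {v. path_consistent l f v}"
        "y \<in> set_tree l \<inter> {v. path_consistent l f v}"
        using x y Node.prems by (auto simp: path_consistent_def)
      then show ?thesis using Node.IH(1) Node.prems \<open>x \<le> y\<close> by (auto dest: mono_onD)
    next
      case 2
      with \<open>x \<le> y\<close> have "a < y" by simp
      with 2 have "x \<in> set_tree r \<inter> {v. path_consistent r f v}"
        "y \<in> set_tree r \<inter> {v. path_consistent r f v}"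
        using x y Node.prems by (auto simp: path_consistent_def)
      then show ?thesis using Node.IH(2) Node.prems \<open>x \<le> y\<close> by (auto dest: mono_onD)
    next
      case 3
      then have "f x \<le> f a" "f a \<le> f y"
        using x y by (auto simp: path_consistent_def)
      then show ?thesis by simp
    qed
  qed
qed simp

fun query_list :: "nat list \<Rightarrow> (nat \<Rightarrow> real) \<Rightarrow> ((nat \<Rightarrow> real) \<Rightarrow> qtree) \<Rightarrow> qtree" where
  "query_list [] g c = c g"
| "query_list (i # is) g c = Ask i (\<lambda>r. query_list is (g(i := r)) c)"

lemma run_qt_query_list:
  "run_qt (query_list is g c) f = run_qt (c (override_on g f (set is))) f"
  by (induction "is" arbitrary: g) (simp_all add: override_on_insert')

lemma nqueries_query_list:
  "nqueries (query_list is g c) f = length is + nqueries (c (override_on g f (set is))) f"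
  by (induction "is" arbitrary: g) (simp_all add: override_on_insert')

lemma queries_in_query_list:
  "queries_in S (query_list is g c) f \<longleftrightarrow>
     set is \<subseteq> S \<and> queries_in S (c (override_on g f (set is))) f"
  by (induction "is" arbitrary: g) (simp_all add: override_on_insert')

text \<open>The root is consistent with its one-element search path, so checking it needs no queries.\<close>
definition check_cost :: "nat tree \<Rightarrow> nat \<Rightarrow> nat" where
  "check_cost T v = (if node_depth T v = 0 then 0 else length (search_path T v))"

fun path_tester :: "nat tree \<Rightarrow> nat list \<Rightarrow> nat \<Rightarrow> qtree" where
  "path_tester T [] b = Output True"
| "path_tester T (v # vs) b =
     (if check_cost T v = 0 then path_tester T vs b
      else if check_cost T v \<le> b then
        query_list (search_path T v) (\<lambda>_. 0)
          (\<lambda>h. if path_consistent T h v then path_tester T vs (b - check_cost T v)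
               else Output False)
      else Output True)"

lemma nqueries_path_tester_le: "nqueries (path_tester T vs b) f \<le> b"
proof (induction vs arbitrary: b)
  case (Cons v vs)
  have "nqueries (path_tester T vs (b - check_cost T v)) f \<le> b - check_cost T v"
    by (rule Cons.IH)
  then show ?case by (auto simp: nqueries_query_list check_cost_def)
qed simp

lemma queries_in_path_tester: "queries_in (set_tree T) (path_tester T vs b) f"
  by (induction vs arbitrary: b) (auto simp: queries_in_query_list set_search_path_subset)

lemma path_consistent_override_search_path:
  "bst T \<Longrightarrow> v \<in> set_tree T \<Longrightarrow>
     path_consistent T (override_on g f (set (search_path T v))) v = path_consistent T f v"
  by (rule path_consistent_cong) auto

lemma path_tester_accepts:
  assumes "bst T" "set vs \<subseteq> set_tree T" "\<forall>v\<in>set vs. path_consistent T f v"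
  shows "run_qt (path_tester T vs b) f"
  using assms
  by (induction vs arbitrary: b)
    (auto simp: run_qt_query_list path_consistent_override_search_path)

lemma path_tester_rejects:
  assumes "bst T" "set vs \<subseteq> set_tree T" "\<exists>v\<in>set vs. \<not> path_consistent T f v"
    and "sum_list (map (check_cost T) vs) \<le> b"
  shows "\<not> run_qt (path_tester T vs b) f"
  using assms
proof (induction vs arbitrary: b)
  case (Cons v vs)
  have "check_cost T v \<noteq> 0" if "\<not> path_consistent T f v"
    using that Cons.prems(1,2) path_consistent_root[of T v f] mem_search_path[of T v]
    by (auto simp: check_cost_def)
  then show ?case
    using Cons by (auto simp: run_qt_query_list path_consistent_override_search_path)
qed simp

lemma mono_on_extension:
  fixes f :: "nat \<Rightarrow> real"
  assumes "finite S" "mono_on S f"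
  shows "\<exists>g. mono g \<and> (\<forall>y\<in>S. g y = f y)"
proof -
  define g where "g x = Max (insert (Min (f ` S)) (f ` {y\<in>S. y \<le> x}))" for x
  have "mono g"
    unfolding g_def using assms(1) by (intro monoI Max_mono) auto
  moreover have "g y = f y" if "y \<in> S" for y
    unfolding g_def using assms that by (intro Max_eqI) (auto intro: mono_onD)
  ultimately show ?thesis by blast
qed

lemma dist_mono_le_prob_inconsistent:
  assumes "bst T" "set_pmf D \<subseteq> set_tree T"
  shows "dist_mono n D f \<le> measure_pmf.prob D {v. \<not> path_consistent T f v}"
proof -
  obtain g where "mono g" and g: "\<forall>y\<in>set_tree T \<inter> {v. path_consistent T f v}. g y = f y"
    using mono_on_extension[OF _ path_consistent_mono_on[OF assms(1)]] by auto
  have "dist_mono n D f \<le> measure_pmf.prob D {x. f x \<noteq> g x}"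
    unfolding dist_mono_def
  proof (rule cInf_lower)
    show "measure_pmf.prob D {x. f x \<noteq> g x}
        \<in> {measure_pmf.prob D {x. f x \<noteq> g x} |g. mono_on {1..n} g}"
      using \<open>mono g\<close> by (auto intro: monotone_on_subset)
  qed (auto intro: bdd_belowI[of _ 0])
  also have "\<dots> \<le> measure_pmf.prob D {v. \<not> path_consistent T f v}"
    using g assms(2) by (intro measure_pmf.finite_measure_mono_AE) (auto simp: AE_measure_pmf_iff)
  finally show ?thesis .
qed

lemma prob_inconsistent_le_exp_depth:
  assumes "set_pmf D \<subseteq> set_tree T"
  shows "measure_pmf.prob D {v. \<not> path_consistent T f v} \<le> exp_depth T D"
proof -
  have "measure_pmf.prob D {v. \<not> path_consistent T f v}
      \<le> measure_pmf.prob D {v. 1 \<le> real (node_depth T v)}"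
    using assms path_consistent_root[of T _ f]
    by (intro measure_pmf.finite_measure_mono_AE) (force simp: AE_measure_pmf_iff, simp)
  also have "\<dots> \<le> exp_depth T D"
    unfolding exp_depth_def
    using integral_Markov_inequality_measure[of D "\<lambda>v. real (node_depth T v)" UNIV 1]
      assms finite_subset[OF assms finite_set_tree]
    by (simp add: integrable_measure_pmf_finite)
  finally show ?thesis .
qed

lemma expectation_check_cost_le:
  assumes "bst T" "set_pmf D \<subseteq> set_tree T"
  shows "measure_pmf.expectation D (\<lambda>v. real (check_cost T v)) \<le> 2 * exp_depth T D"
proof -
  have int: "integrable D h" for h :: "nat \<Rightarrow> real"
    using finite_subset[OF assms(2) finite_set_tree] by (rule integrable_measure_pmf_finite)
  have "real (check_cost T v) \<le> 2 * real (node_depth T v)" if "v \<in> set_pmf D" for v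
    using that assms length_search_path[OF assms(1), of v] by (auto simp: check_cost_def)
  then have "measure_pmf.expectation D (\<lambda>v. real (check_cost T v))
      \<le> measure_pmf.expectation D (\<lambda>v. 2 * real (node_depth T v))"
    by (intro integral_mono_AE[OF int int]) (simp add: AE_measure_pmf_iff)
  also have "\<dots> = 2 * exp_depth T D"
    by (simp add: exp_depth_def)
  finally show ?thesis .
qed

lemma Pi_pmf_sample_in_set_pmf:
  "x \<in> set_pmf (Pi_pmf {..<k::nat} d (\<lambda>_. D)) \<Longrightarrow> i < k \<Longrightarrow> x i \<in> set_pmf D"
  using set_Pi_pmf[of "{..<k}" d "\<lambda>_. D"] by (simp add: PiE_dflt_def)

lemma expectation_Pi_pmf_sum:
  fixes D :: "'a pmf" and h :: "'a \<Rightarrow> real"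
  assumes "integrable D h"
  shows "measure_pmf.expectation (Pi_pmf {..<k} d (\<lambda>_. D)) (\<lambda>x. \<Sum>i<k. h (x i))
       = real k * measure_pmf.expectation D h"
proof -
  define X where "X = Pi_pmf {..<k} d (\<lambda>_. D)"
  have component: "map_pmf (\<lambda>x. x i) X = D" if "i < k" for i
    using that by (simp add: X_def Pi_pmf_component)
  have "integrable X (\<lambda>x. h (x i))" if "i < k" for i
    using assms component[OF that] integrable_map_pmf_eq[of "\<lambda>x. x i" X h] by simp
  moreover have "measure_pmf.expectation X (\<lambda>x. h (x i)) = measure_pmf.expectation D h"
    if "i < k" for i
    using component[OF that] integral_map_pmf[of "\<lambda>x. x i" X h] by simp
  ultimately have "measure_pmf.expectation X (\<lambda>x. \<Sum>i<k. h (x i))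
      = (\<Sum>i<k. measure_pmf.expectation D h)"
    by (simp add: Bochner_Integration.integral_sum)
  then show ?thesis by (simp add: X_def)
qed

lemma prob_Pi_pmf_sum_ge_le:
  fixes D :: "'a pmf" and h :: "'a \<Rightarrow> real"
  assumes "finite (set_pmf D)" "\<And>v. 0 \<le> h v" "0 < c"
  shows "measure_pmf.prob (Pi_pmf {..<k::nat} d (\<lambda>_. D)) {x. c \<le> (\<Sum>i<k. h (x i))}
       \<le> real k * measure_pmf.expectation D h / c"
proof -
  define X where "X = Pi_pmf {..<k} d (\<lambda>_. D)"
  have "finite (set_pmf X)"
    unfolding X_def using assms(1) by (auto simp: set_Pi_pmf intro: finite_PiE_dflt)
  then have "measure_pmf.prob X {x. c \<le> (\<Sum>i<k. h (x i))}
      \<le> measure_pmf.expectation X (\<lambda>x. \<Sum>i<k. h (x i)) / c"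
    using integral_Markov_inequality_measure[of X "\<lambda>x. \<Sum>i<k. h (x i)" UNIV c] assms(2,3)
    by (simp add: integrable_measure_pmf_finite sum_nonneg)
  also have "\<dots> = real k * measure_pmf.expectation D h / c"
    unfolding X_def using assms(1)
    by (simp add: expectation_Pi_pmf_sum integrable_measure_pmf_finite)
  finally show ?thesis unfolding X_def .
qed

lemma prob_Pi_pmf_exists_not_in:
  "measure_pmf.prob (Pi_pmf {..<k::nat} d (\<lambda>_. D)) {x. \<exists>i<k. x i \<notin> G}
     = 1 - measure_pmf.prob D G ^ k"
proof -
  have "{x. \<exists>i<k. x i \<notin> G} = - Pi {..<k} (\<lambda>_. G)" by auto
  then show ?thesis
    using measure_pmf.prob_compl[of "Pi {..<k} (\<lambda>_. G)" "Pi_pmf {..<k} d (\<lambda>_. D)"]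
    by (simp add: measure_Pi_pmf_Pi Compl_eq_Diff_UNIV)
qed

lemma sum_exp_series_le_exp:
  fixes x :: real
  assumes "0 \<le> x"
  shows "(\<Sum>n<m. x ^ n / fact n) \<le> exp x"
proof -
  have "(\<lambda>n. x ^ n /\<^sub>R fact n) sums exp x" by (rule exp_converges)
  then show ?thesis
    using sum_le_suminf[of "\<lambda>n. x ^ n /\<^sub>R fact n" "{..<m}"] assms
    by (simp add: sums_iff divide_inverse_commute)
qed

lemma exp_neg_add_linear_lt:
  fixes x :: real
  assumes "2 \<le> x" "x \<le> 3"
  shows "exp (- x) + x / 12 < 1 / 3"
proof -
  have bound: "exp (- x) \<le> 1 / (\<Sum>n<6. c ^ n / fact n)" if "0 \<le> c" "c \<le> x" for c
  proof -
    have "(\<Sum>n<6. c ^ n / fact n) \<le> exp x"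
      using sum_exp_series_le_exp[OF \<open>0 \<le> c\<close>, of 6] \<open>c \<le> x\<close> by (meson exp_le_cancel_iff order.trans)
    moreover have "0 < (\<Sum>n<6. c ^ n / fact n)"
      using that by (intro sum_pos2[of _ 0]) auto
    ultimately show ?thesis by (simp add: exp_minus field_simps)
  qed
  consider "x \<le> 9/4" | "9/4 \<le> x" "x \<le> 5/2" | "5/2 \<le> x" "x \<le> 11/4" | "11/4 \<le> x"
    by linarith
  then show ?thesis
    by cases (use bound[of 2] bound[of "9/4"] bound[of "5/2"] bound[of "11/4"] assms in
      \<open>simp_all add: numeral_eq_Suc fact_numeral power_numeral_reduce\<close>)
qed

definition sample_path_tester :: "nat tree \<Rightarrow> nat pmf \<Rightarrow> nat \<Rightarrow> nat \<Rightarrow> qtree pmf" where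
  "sample_path_tester T D k b =
     map_pmf (\<lambda>x. path_tester T (map x [0..<k]) b) (Pi_pmf {..<k} 0 (\<lambda>_. D))"

lemma max_queries_le_sample_path_tester:
  assumes "0 \<le> B"
  shows "max_queries_le (sample_path_tester T D k (nat \<lfloor>B\<rfloor>)) B"
proof -
  have "real (nat \<lfloor>B\<rfloor>) \<le> B" using assms by linarith
  then show ?thesis
    unfolding max_queries_le_def sample_path_tester_def
    by (auto intro: order.trans[OF of_nat_mono[OF nqueries_path_tester_le]])
qed

lemma queries_in_sample_path_tester:
  "t \<in> set_pmf (sample_path_tester T D k b) \<Longrightarrow> queries_in (set_tree T) t f"
  by (auto simp: sample_path_tester_def queries_in_path_tester)

lemma sample_path_tester_accepts_mono:
  assumes "bst T" "set_pmf D \<subseteq> set_tree T" "mono_on (set_tree T) f"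
  shows "measure_pmf.prob (sample_path_tester T D k b) {t. run_qt t f} = 1"
proof -
  have "run_qt (path_tester T (map x [0..<k]) b) f"
    if "x \<in> set_pmf (Pi_pmf {..<k} 0 (\<lambda>_. D))" for x
    using that assms Pi_pmf_sample_in_set_pmf[OF that]
    by (intro path_tester_accepts) (auto intro!: path_consistent_if_mono_on)
  then show ?thesis
    unfolding sample_path_tester_def by (simp add: measure_pmf.prob_eq_1 AE_measure_pmf_iff)
qed

lemma sample_path_tester_reject_prob_ge:
  fixes f :: "nat \<Rightarrow> real"
  assumes "bst T" "set_pmf D \<subseteq> set_tree T"
  defines "q \<equiv> measure_pmf.prob D {v. \<not> path_consistent T f v}"
  shows "1 - (1 - q) ^ k - real k * measure_pmf.expectation D (\<lambda>v. real (check_cost T v))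
           / real (Suc b)
         \<le> measure_pmf.prob (sample_path_tester T D k b) {t. \<not> run_qt t f}"
proof -
  define X where "X = Pi_pmf {..<k} 0 (\<lambda>_. D)"
  define S where "S x = (\<Sum>i<k. real (check_cost T (x i)))" for x :: "nat \<Rightarrow> nat"
  define I where "I = {x. \<exists>i<k. \<not> path_consistent T f (x i)}"
  define R where "R = {x. \<not> run_qt (path_tester T (map x [0..<k]) b) f}"
  have "measure_pmf.prob D {v. path_consistent T f v} = 1 - q"
    using measure_pmf.prob_compl[of "{v. path_consistent T f v}" D]
    by (simp add: q_def Compl_eq_Diff_UNIV Collect_neg_eq)
  then have inconsistent_sample: "measure_pmf.prob X I = 1 - (1 - q) ^ k"
    using prob_Pi_pmf_exists_not_in[of k 0 D "{v. path_consistent T f v}"]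
    by (simp add: X_def I_def)
  have over_budget: "measure_pmf.prob X {x. real (Suc b) \<le> S x}
      \<le> real k * measure_pmf.expectation D (\<lambda>v. real (check_cost T v)) / real (Suc b)"
    unfolding X_def S_def using finite_subset[OF assms(2) finite_set_tree]
    by (intro prob_Pi_pmf_sum_ge_le) auto
  have "x \<in> R" if "x \<in> set_pmf X" "x \<in> I" "S x < real (Suc b)" for x
  proof -
    have "sum_list (map (check_cost T) (map x [0..<k])) = (\<Sum>i<k. check_cost T (x i))"
      by (simp add: sum_set_upt_conv_sum_list_nat[symmetric] atLeast0LessThan)
    then have budget: "sum_list (map (check_cost T) (map x [0..<k])) \<le> b"
      using \<open>S x < real (Suc b)\<close> unfolding S_def by (simp flip: of_nat_sum)
    have samples: "set (map x [0..<k]) \<subseteq> set_tree T"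
      using Pi_pmf_sample_in_set_pmf[of x k 0 D] that(1) assms(2) by (auto simp: X_def)
    have "\<exists>v\<in>set (map x [0..<k]). \<not> path_consistent T f v"
      using that(2) by (auto simp: I_def)
    then show ?thesis
      unfolding R_def mem_Collect_eq by (rule path_tester_rejects[OF assms(1) samples _ budget])
  qed
  then have "measure_pmf.prob X I \<le> measure_pmf.prob X (R \<union> {x. real (Suc b) \<le> S x})"
    by (intro measure_pmf.finite_measure_mono_AE) (auto simp: AE_measure_pmf_iff not_le)
  also have "\<dots> \<le> measure_pmf.prob X R + measure_pmf.prob X {x. real (Suc b) \<le> S x}"
    by (rule measure_Un_le) auto
  finally show ?thesis
    using inconsistent_sample over_budget by (simp add: sample_path_tester_def X_def R_def)
qed

lemma nat_ceiling_divide_mult_bounds: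
  fixes a \<epsilon> :: real
  assumes "0 < \<epsilon>" "0 \<le> a"
  shows "a \<le> real (nat \<lceil>a / \<epsilon>\<rceil>) * \<epsilon>" "real (nat \<lceil>a / \<epsilon>\<rceil>) * \<epsilon> < a + \<epsilon>"
proof -
  have k: "real (nat \<lceil>a / \<epsilon>\<rceil>) = of_int \<lceil>a / \<epsilon>\<rceil>"
    using assms by simp
  show "a \<le> real (nat \<lceil>a / \<epsilon>\<rceil>) * \<epsilon>"
    unfolding k by (subst pos_divide_le_eq[OF assms(1), symmetric]) simp
  show "real (nat \<lceil>a / \<epsilon>\<rceil>) * \<epsilon> < a + \<epsilon>"
    using assms ceiling_correct[of "a / \<epsilon>"] unfolding k by (simp add: field_simps)
qed

lemma sample_path_tester_rejects_far:
  fixes f :: "nat \<Rightarrow> real"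
  assumes "bst T" "set_pmf D \<subseteq> set_tree T" "0 < \<epsilon>"
    and far: "\<epsilon> < measure_pmf.prob D {v. \<not> path_consistent T f v}"
  defines "k \<equiv> nat \<lceil>2 / \<epsilon>\<rceil>" and "b \<equiv> nat \<lfloor>24 / \<epsilon> * exp_depth T D\<rfloor>"
  shows "2 / 3 < measure_pmf.prob (sample_path_tester T D k b) {t. \<not> run_qt t f}"
proof -
  define q where "q = measure_pmf.prob D {v. \<not> path_consistent T f v}"
  define c where "c = measure_pmf.expectation D (\<lambda>v. real (check_cost T v))"
  define \<Delta> where "\<Delta> = exp_depth T D"
  have "q \<le> \<Delta>" "q \<le> 1" "c \<le> 2 * \<Delta>"
    using prob_inconsistent_le_exp_depth[OF assms(2)] expectation_check_cost_le[OF assms(1,2)]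
    by (simp_all add: q_def c_def \<Delta>_def)
  have "\<epsilon> < q" using far by (simp add: q_def)
  have k\<epsilon>: "2 \<le> real k * \<epsilon>" "real k * \<epsilon> \<le> 3"
    using nat_ceiling_divide_mult_bounds[OF \<open>0 < \<epsilon>\<close>, of 2] \<open>\<epsilon> < q\<close> \<open>q \<le> 1\<close>
    unfolding k_def by linarith+
  have "(1 - q) ^ k \<le> exp (- \<epsilon>) ^ k"
    using \<open>\<epsilon> < q\<close> \<open>q \<le> 1\<close> exp_minus_ge[of \<epsilon>] by (intro power_mono) auto
  also have "\<dots> = exp (- (real k * \<epsilon>))"
    by (simp flip: exp_of_nat_mult)
  finally have no_inconsistent_sample: "(1 - q) ^ k \<le> exp (- (real k * \<epsilon>))" .
  have "24 / \<epsilon> * \<Delta> < real (Suc b)"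
    unfolding b_def \<Delta>_def by linarith
  moreover have "0 < \<Delta>"
    using \<open>0 < \<epsilon>\<close> \<open>\<epsilon> < q\<close> \<open>q \<le> \<Delta>\<close> by simp
  ultimately have "real k * c / real (Suc b) \<le> real k * (2 * \<Delta>) / (24 / \<epsilon> * \<Delta>)"
    using \<open>c \<le> 2 * \<Delta>\<close> \<open>0 < \<epsilon>\<close> by (intro frac_le mult_left_mono) auto
  also have "\<dots> = real k * \<epsilon> / 12"
    using \<open>0 < \<epsilon>\<close> \<open>0 < \<Delta>\<close> by (simp add: field_simps)
  finally have over_budget: "real k * c / real (Suc b) \<le> real k * \<epsilon> / 12" .
  show ?thesis
    using sample_path_tester_reject_prob_ge[OF assms(1,2), of f k b]
      exp_neg_add_linear_lt[OF k\<epsilon>] no_inconsistent_sample over_budget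
    unfolding q_def c_def by linarith
qed

theorem lemma4p2:
  fixes n :: nat and D :: "nat pmf" and \<epsilon> :: real and T :: "nat tree"
  assumes "set_pmf D \<subseteq> {1..n}"
    and "\<epsilon> > 0"
    and "is_bst_on n T"
  shows "\<exists>A. mono_tester n D \<epsilon> A \<and> max_queries_le A (24 / \<epsilon> * exp_depth T D)"
proof -
  have "bst T" and T: "set_tree T = {1..n}"
    using assms(3) by (auto simp: is_bst_on_def)
  with assms(1) have D: "set_pmf D \<subseteq> set_tree T" by simp
  define A where "A = sample_path_tester T D (nat \<lceil>2 / \<epsilon>\<rceil>) (nat \<lfloor>24 / \<epsilon> * exp_depth T D\<rfloor>)"
  have "mono_tester n D \<epsilon> A"
    unfolding mono_tester_def
  proof (intro conjI allI impI ballI)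
    show "queries_in {1..n} t f" if "t \<in> set_pmf A" for t f
      using queries_in_sample_path_tester[OF that[unfolded A_def]] T by simp
    show "2 / 3 < measure_pmf.prob A {t. run_qt t f}" if "mono_on {1..n} f" for f
      using sample_path_tester_accepts_mono[OF \<open>bst T\<close> D] that T by (simp add: A_def)
    show "2 / 3 < measure_pmf.prob A {t. \<not> run_qt t f}" if "\<epsilon> < dist_mono n D f" for f
      using sample_path_tester_rejects_far[OF \<open>bst T\<close> D assms(2)] that
        dist_mono_le_prob_inconsistent[OF \<open>bst T\<close> D, of n f] by (simp add: A_def)
  qed
  moreover have "max_queries_le A (24 / \<epsilon> * exp_depth T D)"
    unfolding A_def using assms(2)
    by (intro max_queries_le_sample_path_tester) (simp add: exp_depth_def)
  ultimately show ?thesis by blast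
qed

end
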